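(* Let $(A,H,D,J)$ be a finite-dimensional real spectral triple, and with $D_0,D_1,D_R$ as in the context assume that $D_R$ commutes with every element of $A$. Then the 2nd order condition holds (i.e. every element of $\mathcal{C}\ell_D(A)$ commutes with every element of $\mathcal{C}\ell_D(A)^\circ$) if and only if $[D_0,D_1]=0$.
   Context: A finite-dimensional real spectral triple $(A,H,D,J)$ consists of a finite-dimensional complex Hilbert space $H$, a unital (real or complex) $*$-subalgebra $A\subseteq\mathrm{End}_{\mathbb{C}}(H)$, a selfadjoint operator $D$ on $H$, and an antilinear isometry $J$ with $J^2=\varepsilon1$, $JD=\varepsilon'DJ$ ($\varepsilon,\varepsilon'\in\{\pm1\}$; in the even case also $J\gamma=\varepsilon''\gamma J$ for a grading $\gamma$ commuting with $A$ and anticommuting with $D$), such that $[a,JbJ^{-1}]=0$ and $[[D,a],JbJ^{-1}]=0$ for all $a,b\in A$. Let $A_{\mathbb{C}}$ be the complex $*$-subalgebra generated by $A$, $A_{\mathbb{C}}\cong\bigoplus_{i=1}^N M_{n_i}(\mathbb{C})$, with $P_i$ the units of the summands; set $Q_j=JP_jJ^{-1}$, $D_{ij,kl}=P_iQ_jDP_kQ_l$, $D_0=\sum_{i\neq k}D_{ij,kj}$ (sum over $i,j,k$ with $i\ne k$), $D_1=\sum_{j\neq l}D_{ij,il}$ (sum over $i,j,l$ with $j\neq l$), $D_R=\sum_{i,j}D_{ij,ij}$. For $\xi\in\mathrm{End}_{\mathbb{C}}(H)$, $\xi^\circ=J\xi^*J^{-1}$, and $S^\circ=\{\xi^\circ:\xi\in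 S\}$. $\mathcal{C}\ell_D(A)$ is the complex $*$-subalgebra of $\mathrm{End}_{\mathbb{C}}(H)$ generated by $A$ and the operators $a[D,b]$, $a,b\in A$. *)

theory Defs
  imports "HOL-Analysis.Analysis"
begin

text \<open>The finite-dimensional complex Hilbert space H is modelled as complex^'n
(standard inner product; the norm on complex^'n is the l2 norm), with 'n an
arbitrary finite index type.\<close>

type_synonym 'n cop = "complex^'n^'n"
type_synonym 'n hvec = "complex^'n"

definition adj :: "'n::finite cop \<Rightarrow> 'n cop" where
  "adj M = (\<chi> i j. cnj (M $ j $ i))"

definition cscale :: "complex \<Rightarrow> 'n::finite cop \<Rightarrow> 'n cop" where
  "cscale c M = (\<chi> i j. c * M $ i $ j)"

definition commutator :: "'n::finite cop \<Rightarrow> 'n cop \<Rightarrow> 'n cop" where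
  "commutator a b = a ** b - b ** a"

definition antilinear_isometry :: "('n::finite hvec \<Rightarrow> 'n hvec) \<Rightarrow> bool" where
  "antilinear_isometry J \<longleftrightarrow>
     (\<forall>x y. J (x + y) = J x + J y) \<and>
     (\<forall>c x. J (c *s x) = cnj c *s J x) \<and>
     (\<forall>x. norm (J x) = norm x) \<and> bij J"

text \<open>J xi J^{-1} as an operator (a complex-linear map, given as a matrix).\<close>
definition Jconj :: "('n::finite hvec \<Rightarrow> 'n hvec) \<Rightarrow> 'n cop \<Rightarrow> 'n cop" where
  "Jconj J xi = matrix (\<lambda>x. J (xi *v (inv J x)))"

definition opp :: "('n::finite hvec \<Rightarrow> 'n hvec) \<Rightarrow> 'n cop \<Rightarrow> 'n cop" where
  "opp J xi = Jconj J (adj xi)"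

definition real_star_subalgebra :: "'n::finite cop set \<Rightarrow> bool" where
  "real_star_subalgebra A \<longleftrightarrow>
     mat 1 \<in> A \<and>
     (\<forall>a\<in>A. \<forall>b\<in>A. a + b \<in> A) \<and>
     (\<forall>r::real. \<forall>a\<in>A. r *\<^sub>R a \<in> A) \<and>
     (\<forall>a\<in>A. \<forall>b\<in>A. a ** b \<in> A) \<and>
     (\<forall>a\<in>A. adj a \<in> A)"

inductive_set star_alg_gen :: "'n::finite cop set \<Rightarrow> 'n cop set" for S where
  gen: "a \<in> S \<Longrightarrow> a \<in> star_alg_gen S"
| zero: "0 \<in> star_alg_gen S"
| add: "a \<in> star_alg_gen S \<Longrightarrow> b \<in> star_alg_gen S \<Longrightarrow> a + b \<in> star_alg_gen S"
| scale: "a \<in> star_alg_gen S \<Longrightarrow> cscale c a \<in> star_alg_gen S"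
| mult: "a \<in> star_alg_gen S \<Longrightarrow> b \<in> star_alg_gen S \<Longrightarrow> a ** b \<in> star_alg_gen S"
| adj: "a \<in> star_alg_gen S \<Longrightarrow> adj a \<in> star_alg_gen S"

text \<open>Finite-dimensional real spectral triple (A,H,D,J) with signs eps, eps';
  the optional grading gives the even case (with sign eps'').\<close>
definition real_spectral_triple ::
  "'n::finite cop set \<Rightarrow> 'n cop \<Rightarrow> ('n hvec \<Rightarrow> 'n hvec) \<Rightarrow> complex \<Rightarrow> complex
   \<Rightarrow> ('n cop \<times> complex) option \<Rightarrow> bool" where
  "real_spectral_triple A D J eps eps' grading \<longleftrightarrow>
     real_star_subalgebra A \<and>
     adj D = D \<and>
     antilinear_isometry J \<and>
     eps \<in> {1, -1} \<and> eps' \<in> {1, -1} \<and>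
     (\<forall>x. J (J x) = eps *s x) \<and>
     (\<forall>x. J (D *v x) = eps' *s (D *v J x)) \<and>
     (case grading of None \<Rightarrow> True
      | Some (g, eps'') \<Rightarrow> eps'' \<in> {1, -1} \<and> adj g = g \<and> g ** g = mat 1 \<and>
           (\<forall>a\<in>A. g ** a = a ** g) \<and> g ** D = - (D ** g) \<and>
           (\<forall>x. J (g *v x) = eps'' *s (g *v J x))) \<and>
     (\<forall>a\<in>A. \<forall>b\<in>A. commutator a (Jconj J b) = 0) \<and>
     (\<forall>a\<in>A. \<forall>b\<in>A. commutator (commutator D a) (Jconj J b) = 0)"

definition AC :: "'n::finite cop set \<Rightarrow> 'n cop set" where
  "AC A = star_alg_gen A"

text \<open>Units P_i of the simple summands of A_C = the minimal (nonzero) central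
  projections of A_C.\<close>
definition central_projection :: "'n::finite cop set \<Rightarrow> 'n cop \<Rightarrow> bool" where
  "central_projection S P \<longleftrightarrow> P \<in> S \<and> P ** P = P \<and> adj P = P \<and> P \<noteq> 0 \<and>
     (\<forall>x\<in>S. P ** x = x ** P)"

definition summand_units :: "'n::finite cop set \<Rightarrow> 'n cop set" where
  "summand_units A = {P. central_projection (AC A) P \<and>
     (\<forall>Q. central_projection (AC A) Q \<and> Q ** P = Q \<longrightarrow> Q = P)}"

definition Dblock :: "('n::finite hvec \<Rightarrow> 'n hvec) \<Rightarrow> 'n cop \<Rightarrow> 'n cop \<Rightarrow> 'n cop
   \<Rightarrow> 'n cop \<Rightarrow> 'n cop \<Rightarrow> 'n cop" where
  "Dblock J D Pa Pb Pc Pd = Pa ** Jconj J Pb ** D ** Pc ** Jconj J Pd"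

definition D0 :: "'n::finite cop set \<Rightarrow> 'n cop \<Rightarrow> ('n hvec \<Rightarrow> 'n hvec) \<Rightarrow> 'n cop" where
  "D0 A D J = (\<Sum>Pa\<in>summand_units A. \<Sum>Pb\<in>summand_units A.
                 \<Sum>Pc\<in>summand_units A - {Pa}. Dblock J D Pa Pb Pc Pb)"

definition D1 :: "'n::finite cop set \<Rightarrow> 'n cop \<Rightarrow> ('n hvec \<Rightarrow> 'n hvec) \<Rightarrow> 'n cop" where
  "D1 A D J = (\<Sum>Pa\<in>summand_units A. \<Sum>Pb\<in>summand_units A.
                 \<Sum>Pd\<in>summand_units A - {Pb}. Dblock J D Pa Pb Pa Pd)"

definition DR :: "'n::finite cop set \<Rightarrow> 'n cop \<Rightarrow> ('n hvec \<Rightarrow> 'n hvec) \<Rightarrow> 'n cop" where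
  "DR A D J = (\<Sum>Pa\<in>summand_units A. \<Sum>Pb\<in>summand_units A. Dblock J D Pa Pb Pa Pb)"

definition CliffD :: "'n::finite cop set \<Rightarrow> 'n cop \<Rightarrow> 'n cop set" where
  "CliffD A D = star_alg_gen (A \<union> {a ** commutator D b | a b. a \<in> A \<and> b \<in> A})"

definition second_order_condition ::
  "'n::finite cop set \<Rightarrow> 'n cop \<Rightarrow> ('n hvec \<Rightarrow> 'n hvec) \<Rightarrow> bool" where
  "second_order_condition A D J \<longleftrightarrow>
     (\<forall>x\<in>CliffD A D. \<forall>y\<in>opp J ` CliffD A D. x ** y = y ** x)"

end

theory Submission
  imports Defs
begin

text \<open>Let P_i be the units of the summands of A_C and Q_j = J P_j J^{-1}; by the order-zero
  condition all P_i and Q_j commute.  For i \<noteq> k the block P_i D P_k = P_i [D, P_k] commutes with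
  A_C\<degree> by the order-one condition, so the Q_j sum out of D_0 and D_0 = \<Sum>_{i\<noteq>k} P_i D P_k; symmetrically
  D_1 = \<Sum>_{j\<noteq>l} Q_j D Q_l commutes with A_C, and D = D_0 + D_1 + D_R.  If D_R commutes with A (hence,
  as J D_R J^{-1} = \<plusminus>D_R, also with A\<degree>), then [D, a] = [D_0, a] and [D, b\<degree>] = [D_1, b\<degree>] for a, b \<in> A.
  When [D_0, D_1] = 0, the operator [D_0, a] commutes with D_1 and with b\<degree>, hence with [D_1, b\<degree>],
  which gives the second-order condition on generators.  Conversely P_i [D, P_k] lies in Cl_D(A)
  and (P_l [D, P_j])\<degree> is \<plusminus>Q_j D Q_l, so the second-order condition makes every block of D_0 commute
  with every block of D_1.\<close>

lemma matrix_add_rdistrib: "(A + B) ** C = A ** C + B ** (C::'a::semiring_1^'p^'n)"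
  by (vector matrix_matrix_mult_def sum.distrib[symmetric] field_simps)

lemma matrix_diff_ldistrib: "A ** (B - C) = A ** B - A ** (C::'a::ring_1^'p^'n)"
  by (vector matrix_matrix_mult_def sum_subtractf[symmetric] field_simps)

lemma matrix_diff_rdistrib: "(A - B) ** C = A ** C - B ** (C::'a::ring_1^'p^'n)"
  by (vector matrix_matrix_mult_def sum_subtractf[symmetric] field_simps)

lemma matrix_mult_sum_left: "(\<Sum>i\<in>S. f i) ** (B::'a::semiring_1^'p^'n) = (\<Sum>i\<in>S. f i ** B)"
  by (induction S rule: infinite_finite_induct) (auto simp: matrix_add_rdistrib)

lemma matrix_mult_sum_right: "B ** (\<Sum>i\<in>S. f i) = (\<Sum>i\<in>S. B ** (f i::'a::semiring_1^'p^'n))"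
  by (induction S rule: infinite_finite_induct) (auto simp: matrix_add_ldistrib)

lemma matrix_mult_sum_sum:
  "(\<Sum>i\<in>S. f i) ** M ** (\<Sum>j\<in>T. g j) = (\<Sum>i\<in>S. \<Sum>j\<in>T. f i ** M ** (g j::'a::semiring_1^'n^'n))"
  by (simp add: matrix_mult_sum_left matrix_mult_sum_right) (rule sum.swap)

lemma cscale_mv: "cscale c M *v x = c *s (M *v x)"
  by (simp add: cscale_def matrix_vector_mult_def vec_eq_iff sum_distrib_left mult.assoc)

lemma cscale_mult_left: "cscale c A ** B = cscale c (A ** B)"
  by (simp add: matrix_eq matrix_vector_mul_assoc[symmetric] cscale_mv)

lemma cscale_mult_right: "A ** cscale c B = cscale c (A ** B)"
  by (simp add: matrix_eq matrix_vector_mul_assoc[symmetric] cscale_mv vec.scale)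

lemma cscale_one [simp]: "cscale 1 M = M"
  by (simp add: cscale_def)

lemma cscale_minus_one: "cscale (-1) M = - M"
  by (simp add: cscale_def vec_eq_iff)

lemma cscale_cscale: "cscale a (cscale b M) = cscale (a * b) M"
  by (simp add: cscale_def mult.assoc)

lemma cscale_add: "cscale c (A + B) = cscale c A + cscale c B"
  by (simp add: cscale_def vec_eq_iff algebra_simps)

lemma cscale_diff: "cscale c (A - B) = cscale c A - cscale c B"
  by (simp add: cscale_def vec_eq_iff algebra_simps)

lemma cscale_zero [simp]: "cscale c 0 = 0"
  by (simp add: cscale_def vec_eq_iff)

lemma cscale_sum: "cscale c (\<Sum>i\<in>S. f i) = (\<Sum>i\<in>S. cscale c (f i))"
  by (induction S rule: infinite_finite_induct) (auto simp: cscale_add)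

lemma cscale_cancel: "c \<noteq> 0 \<Longrightarrow> cscale c X = cscale c Y \<Longrightarrow> X = Y"
  by (simp add: cscale_def vec_eq_iff)

lemma adj_adj [simp]: "adj (adj M) = M"
  by (simp add: adj_def vec_eq_iff)

lemma adj_add: "adj (A + B) = adj A + adj B"
  by (simp add: adj_def vec_eq_iff)

lemma adj_diff: "adj (A - B) = adj A - adj B"
  by (simp add: adj_def vec_eq_iff)

lemma adj_zero [simp]: "adj 0 = 0"
  by (simp add: adj_def vec_eq_iff)

lemma adj_cscale: "adj (cscale c M) = cscale (cnj c) (adj M)"
  by (simp add: adj_def cscale_def vec_eq_iff)

lemma adj_mult: "adj (A ** B) = adj B ** adj A"
  by (simp add: adj_def matrix_matrix_mult_def vec_eq_iff mult.commute)

lemma adj_sum: "adj (\<Sum>i\<in>S. f i) = (\<Sum>i\<in>S. adj (f i))"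
  by (induction S rule: infinite_finite_induct) (auto simp: adj_add)

lemma sum_split_diagonal:
  assumes "finite S"
  shows "(\<Sum>x\<in>S. \<Sum>y\<in>S. f x y) = (\<Sum>x\<in>S. \<Sum>y\<in>S-{x}. f x y) + (\<Sum>x\<in>S. f x x)"
proof -
  have "(\<Sum>x\<in>S. \<Sum>y\<in>S. f x y) = (\<Sum>x\<in>S. f x x + (\<Sum>y\<in>S-{x}. f x y))"
    using assms by (intro sum.cong refl) (simp add: sum.remove)
  then show ?thesis
    by (simp add: sum.distrib add.commute)
qed

lemma commutator_eq_0_iff: "commutator a b = 0 \<longleftrightarrow> a ** b = b ** a"
  by (simp add: commutator_def)

lemma commutator_add_right: "commutator D (a + b) = commutator D a + commutator D b"
  by (simp add: commutator_def matrix_add_ldistrib matrix_add_rdistrib)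

lemma commutator_mult_right: "commutator D (a ** b) = commutator D a ** b + a ** commutator D b"
  by (simp add: commutator_def matrix_diff_ldistrib matrix_diff_rdistrib matrix_mul_assoc)

lemma commutator_cscale_left: "commutator (cscale c X) Y = cscale c (commutator X Y)"
  by (simp add: commutator_def cscale_mult_left cscale_mult_right cscale_diff)

lemma commutator_cscale_right: "commutator X (cscale c Y) = cscale c (commutator X Y)"
  by (simp add: commutator_def cscale_mult_left cscale_mult_right cscale_diff)

lemma commutator_adj_right: "adj D = D \<Longrightarrow> commutator D (adj a) = cscale (-1) (adj (commutator D a))"
  by (simp add: commutator_def adj_diff adj_mult cscale_minus_one)

lemma adj_commutator: "adj D = D \<Longrightarrow> adj (commutator D a) = cscale (-1) (commutator D (adj a))"
  by (simp add: commutator_def adj_diff adj_mult cscale_minus_one)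

lemma commutator_add_left: "commutator (X + Y) c = commutator X c + commutator Y c"
  by (simp add: commutator_def matrix_add_ldistrib matrix_add_rdistrib)

lemma mult_commutator_of_orthogonal: "P ** P' = 0 \<Longrightarrow> P ** D ** P' = P ** commutator D P'"
  by (simp add: commutator_def matrix_diff_ldistrib matrix_mul_assoc)

lemma commutes_with_commutator:
  "z ** x = x ** z \<Longrightarrow> z ** y = y ** z \<Longrightarrow> z ** commutator x y = commutator x y ** z"
  by (simp add: commutator_def matrix_diff_ldistrib matrix_diff_rdistrib matrix_mul_assoc)
     (metis matrix_mul_assoc)

text \<open>An instance of the Jacobi identity [a,[D,e]] = [[a,D],e] + [D,[a,e]].\<close>
lemma commutes_with_commutator_jacobi:
  assumes "a ** e = e ** a" and "commutator D a ** e = e ** commutator D a"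
  shows "a ** commutator D e = commutator D e ** a"
proof -
  have "D ** a ** e - a ** D ** e = e ** D ** a - e ** a ** D"
    using assms(2) by (simp add: commutator_def matrix_diff_ldistrib matrix_diff_rdistrib matrix_mul_assoc)
  then have "a ** D ** e - a ** e ** D = D ** e ** a - e ** D ** a"
    using assms(1) by (simp add: algebra_simps matrix_mul_assoc[symmetric])
  then show ?thesis
    by (simp add: commutator_def matrix_diff_ldistrib matrix_diff_rdistrib matrix_mul_assoc)
qed

definition commutant :: "'n::finite cop set \<Rightarrow> 'n cop set" where
  "commutant S = {y. \<forall>s\<in>S. s ** y = y ** s}"

lemma mem_commutant: "y \<in> commutant S \<longleftrightarrow> (\<forall>s\<in>S. s ** y = y ** s)"
  by (simp add: commutant_def)

lemma subset_commutant_sym: "S \<subseteq> commutant T \<longleftrightarrow> T \<subseteq> commutant S"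
  unfolding commutant_def by auto

lemma zero_mem_commutant: "0 \<in> commutant S"
  by (simp add: commutant_def)

lemma commutant_add: "x \<in> commutant S \<Longrightarrow> y \<in> commutant S \<Longrightarrow> x + y \<in> commutant S"
  by (simp add: commutant_def matrix_add_ldistrib matrix_add_rdistrib)

lemma commutant_mult: "x \<in> commutant S \<Longrightarrow> y \<in> commutant S \<Longrightarrow> x ** y \<in> commutant S"
  unfolding commutant_def by (auto simp: matrix_mul_assoc) (metis matrix_mul_assoc)

lemma commutant_cscale: "x \<in> commutant S \<Longrightarrow> cscale c x \<in> commutant S"
  unfolding commutant_def by (simp add: cscale_mult_left cscale_mult_right)

lemma commutant_sum: "(\<And>i. i \<in> I \<Longrightarrow> f i \<in> commutant S) \<Longrightarrow> (\<Sum>i\<in>I. f i) \<in> commutant S"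
  by (induction I rule: infinite_finite_induct) (auto simp: zero_mem_commutant commutant_add)

lemma commutant_adj: "adj ` S \<subseteq> S \<Longrightarrow> x \<in> commutant S \<Longrightarrow> adj x \<in> commutant S"
  unfolding commutant_def by (auto simp: image_subset_iff) (metis adj_adj adj_mult)

lemma star_alg_gen_subset_commutant:
  assumes "adj ` T \<subseteq> T" and "S \<subseteq> commutant T"
  shows "star_alg_gen S \<subseteq> commutant T"
proof
  fix x assume "x \<in> star_alg_gen S"
  then show "x \<in> commutant T"
    by induction
      (use assms in \<open>auto simp: zero_mem_commutant commutant_add commutant_mult
         commutant_cscale commutant_adj\<close>)
qed

lemma star_alg_gen_mono: "S \<subseteq> S' \<Longrightarrow> star_alg_gen S \<subseteq> star_alg_gen S'"
proof
  fix x assume "S \<subseteq> S'" and "x \<in> star_alg_gen S"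
  from this(2) show "x \<in> star_alg_gen S'"
    by induction (use \<open>S \<subseteq> S'\<close> in \<open>auto intro: star_alg_gen.intros\<close>)
qed

lemma star_alg_gen_diff: "a \<in> star_alg_gen S \<Longrightarrow> b \<in> star_alg_gen S \<Longrightarrow> a - b \<in> star_alg_gen S"
  by (metis star_alg_gen.add star_alg_gen.scale cscale_minus_one diff_conv_add_uminus)

lemma star_alg_gen_sum: "(\<And>i. i \<in> I \<Longrightarrow> f i \<in> star_alg_gen S) \<Longrightarrow> (\<Sum>i\<in>I. f i) \<in> star_alg_gen S"
  by (induction I rule: infinite_finite_induct) (auto intro: star_alg_gen.intros)

lemma star_alg_gen_commute:
  assumes "S \<subseteq> commutant (T \<union> adj ` T)"
  shows "star_alg_gen T \<subseteq> commutant (star_alg_gen S)"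
proof -
  have "star_alg_gen S \<subseteq> commutant (T \<union> adj ` T)"
    using assms by (intro star_alg_gen_subset_commutant) auto
  then have "star_alg_gen (T \<union> adj ` T) \<subseteq> commutant (star_alg_gen S)"
    by (intro star_alg_gen_subset_commutant) (auto simp: subset_commutant_sym intro: star_alg_gen.adj)
  moreover have "star_alg_gen T \<subseteq> star_alg_gen (T \<union> adj ` T)"
    by (intro star_alg_gen_mono) auto
  ultimately show ?thesis by blast
qed

section \<open>Antilinear isometries\<close>

definition cinner :: "'n::finite hvec \<Rightarrow> 'n hvec \<Rightarrow> complex" where
  "cinner x y = (\<Sum>i\<in>UNIV. x$i * cnj (y$i))"

lemma cinner_polarization:
  "4 * cinner x y = of_real ((norm (x + y))^2) - of_real ((norm (x - y))^2)
     + \<i> * of_real ((norm (x + \<i> *s y))^2) - \<i> * of_real ((norm (x - \<i> *s y))^2)"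
proof -
  have polar: "4 * (a * cnj b) = of_real ((cmod (a + b))^2) - of_real ((cmod (a - b))^2)
     + \<i> * of_real ((cmod (a + \<i> * b))^2) - \<i> * of_real ((cmod (a - \<i> * b))^2)" for a b
    unfolding complex_norm_square by (simp add: ring_distribs algebra_simps)
  have norm_sq: "(norm z)^2 = (\<Sum>i\<in>UNIV. (cmod (z$i))^2)" for z :: "'a hvec"
    by (simp add: power2_norm_eq_inner inner_vec_def)
  have "4 * cinner x y = (\<Sum>i\<in>UNIV. 4 * (x$i * cnj (y$i)))"
    by (simp add: cinner_def sum_distrib_left)
  also have "\<dots> = (\<Sum>i\<in>UNIV. of_real ((cmod ((x + y)$i))^2) - of_real ((cmod ((x - y)$i))^2)
     + \<i> * of_real ((cmod ((x + \<i> *s y)$i))^2) - \<i> * of_real ((cmod ((x - \<i> *s y)$i))^2))"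
    by (simp only: polar vector_add_component vector_minus_component vector_smult_component)
  also have "\<dots> = of_real ((norm (x + y))^2) - of_real ((norm (x - y))^2)
     + \<i> * of_real ((norm (x + \<i> *s y))^2) - \<i> * of_real ((norm (x - \<i> *s y))^2)"
    unfolding norm_sq of_real_sum sum_distrib_left sum_subtractf sum.distrib ..
  finally show ?thesis .
qed

lemma cinner_axis: "cinner (axis i 1) y = cnj (y$i)"
proof -
  have terms: "(\<lambda>j. axis i 1 $ j * cnj (y $ j)) = (\<lambda>j. if j = i then cnj (y$i) else 0)"
    by (auto simp: axis_def)
  show ?thesis
    unfolding cinner_def terms by simp
qed

lemma cinner_eqI: "(\<And>x. cinner x y = cinner x z) \<Longrightarrow> y = z"
  by (metis cinner_axis complex_cnj_cnj vec_eq_iff)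

lemma cinner_adj: "cinner (M *v x) y = cinner x (adj M *v y)"
proof -
  have "cinner (M *v x) y = (\<Sum>i\<in>UNIV. \<Sum>j\<in>UNIV. M$i$j * x$j * cnj (y$i))"
    unfolding cinner_def matrix_vector_mult_def by (simp add: sum_distrib_right)
  also have "\<dots> = (\<Sum>j\<in>UNIV. \<Sum>i\<in>UNIV. M$i$j * x$j * cnj (y$i))"
    by (rule sum.swap)
  also have "\<dots> = cinner x (adj M *v y)"
    unfolding cinner_def adj_def matrix_vector_mult_def
    by (simp add: sum_distrib_left cnj_sum mult_ac)
  finally show ?thesis .
qed

locale antilinear_isometric =
  fixes J :: "'n::finite hvec \<Rightarrow> 'n hvec"
  assumes J: "antilinear_isometry J"
begin

lemma antilinear_add: "J (x + y) = J x + J y"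
  using J by (simp add: antilinear_isometry_def)

lemma antilinear_scale: "J (c *s x) = cnj c *s J x"
  using J by (simp add: antilinear_isometry_def)

lemma antilinear_diff: "J (x - y) = J x - J y"
  by (metis antilinear_add add_diff_cancel diff_add_cancel)

lemma antilinear_inv_left [simp]: "J (inv J x) = x"
  using J by (simp add: antilinear_isometry_def bij_is_surj surj_f_inv_f)

lemma antilinear_inv_right [simp]: "inv J (J x) = x"
  using J by (simp add: antilinear_isometry_def bij_is_inj inv_f_f)

lemma antilinear_cinner: "cinner (J x) (J y) = cnj (cinner x y)"
proof -
  have norm: "norm (J z) = norm z" for z
    using J by (simp add: antilinear_isometry_def)
  have "\<i> *s J y = J ((- \<i>) *s y)"
    by (subst antilinear_scale) simp
  then have "4 * cinner (J x) (J y) = cnj (4 * cinner x y)"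
    unfolding cinner_polarization
    by (simp add: antilinear_add[symmetric] antilinear_diff[symmetric] norm algebra_simps)
  then show ?thesis by simp
qed

lemma Jconj_mv: "Jconj J X *v x = J (X *v inv J x)"
proof -
  have inv_add: "inv J (x + y) = inv J x + inv J y" for x y
    by (metis antilinear_add antilinear_inv_left antilinear_inv_right)
  have inv_scale: "inv J (c *s x) = cnj c *s inv J x" for c x
    by (metis antilinear_scale antilinear_inv_left antilinear_inv_right complex_cnj_cnj)
  have "Vector_Spaces.linear (*s) (*s) (\<lambda>x. J (X *v inv J x))"
    using matrix_vector_mul_linear_gen[of X]
    unfolding Vector_Spaces.linear_iff
    by (auto simp: inv_add inv_scale antilinear_add antilinear_scale vec.add vec.scale)
  then show ?thesis
    unfolding Jconj_def by (rule matrix_works)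
qed

lemma Jconj_mult: "Jconj J (X ** Y) = Jconj J X ** Jconj J Y"
  by (simp add: matrix_eq Jconj_mv matrix_vector_mul_assoc[symmetric])

lemma Jconj_add: "Jconj J (X + Y) = Jconj J X + Jconj J Y"
  by (simp add: matrix_eq Jconj_mv matrix_vector_mult_add_rdistrib antilinear_add)

lemma Jconj_diff: "Jconj J (X - Y) = Jconj J X - Jconj J Y"
  by (simp add: matrix_eq Jconj_mv matrix_vector_mult_diff_rdistrib antilinear_diff)

lemma Jconj_zero [simp]: "Jconj J 0 = 0"
  by (metis Jconj_diff diff_self)

lemma Jconj_cscale: "Jconj J (cscale c X) = cscale (cnj c) (Jconj J X)"
  by (simp add: matrix_eq Jconj_mv cscale_mv antilinear_scale)

lemma Jconj_sum: "Jconj J (\<Sum>i\<in>S. f i) = (\<Sum>i\<in>S. Jconj J (f i))"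
  by (induction S rule: infinite_finite_induct) (auto simp: Jconj_add)

lemma Jconj_commutator: "Jconj J (commutator X Y) = commutator (Jconj J X) (Jconj J Y)"
  by (simp add: commutator_def Jconj_diff Jconj_mult)

lemma adj_Jconj: "adj (Jconj J X) = Jconj J (adj X)"
proof -
  have "cinner x (adj (Jconj J X) *v y) = cinner x (Jconj J (adj X) *v y)" for x y
  proof -
    have "cinner x (adj (Jconj J X) *v y) = cinner (J (X *v inv J x)) (J (inv J y))"
      by (simp add: cinner_adj[symmetric] Jconj_mv)
    also have "\<dots> = cnj (cinner (inv J x) (adj X *v inv J y))"
      using antilinear_cinner[of "X *v inv J x" "inv J y"] by (simp add: cinner_adj)
    also have "\<dots> = cinner x (Jconj J (adj X) *v y)"
      using antilinear_cinner[of "inv J x" "adj X *v inv J y"] by (simp add: Jconj_mv)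
    finally show ?thesis .
  qed
  then show ?thesis
    by (simp add: matrix_eq cinner_eqI)
qed

lemma adj_opp: "adj (opp J X) = Jconj J X"
  by (simp add: opp_def adj_Jconj)

lemma star_alg_gen_Jconj: "x \<in> star_alg_gen S \<Longrightarrow> Jconj J x \<in> star_alg_gen (Jconj J ` S)"
  by (induction rule: star_alg_gen.induct)
     (auto intro: star_alg_gen.intros simp: Jconj_add Jconj_mult Jconj_cscale adj_Jconj[symmetric])

lemma star_alg_gen_opp: "x \<in> star_alg_gen S \<Longrightarrow> opp J x \<in> star_alg_gen (opp J ` S)"
proof (induction rule: star_alg_gen.induct)
  case (adj a)
  have "opp J (adj a) = adj (opp J a)"
    by (simp add: adj_opp) (simp add: opp_def)
  then show ?case
    using adj by (simp add: star_alg_gen.adj)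
qed (auto intro: star_alg_gen.intros
       simp: opp_def adj_add adj_cscale adj_mult Jconj_add Jconj_cscale Jconj_mult)

end

section \<open>Units of the simple summands\<close>

lemma mem_AC: "a \<in> A \<Longrightarrow> a \<in> AC A"
  by (simp add: AC_def star_alg_gen.gen)

lemma range_mv_subspace: "vec.subspace (range (\<lambda>x. (M::'n::finite cop) *v x))"
  unfolding vec.subspace_def
proof (intro conjI ballI allI)
  show "0 \<in> range ((*v) M)"
    by (metis matrix_vector_mult_0_right rangeI)
  show "x + y \<in> range ((*v) M)" if "x \<in> range ((*v) M)" "y \<in> range ((*v) M)" for x y
    using that by (auto simp: matrix_vector_right_distrib[symmetric])
  show "c *s x \<in> range ((*v) M)" if "x \<in> range ((*v) M)" for c x
    using that by (metis vec.scale rangeE rangeI)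
qed

lemma projection_eq_of_dim_le:
  fixes Q Q0 :: "'n::finite cop"
  assumes "Q ** Q = Q" and "Q0 ** Q = Q" and "Q ** Q0 = Q"
    and dim: "vec.dim (range ((*v) Q0)) \<le> vec.dim (range ((*v) Q))"
  shows "Q = Q0"
proof -
  have "Q *v x = Q0 *v (Q *v x)" for x
    using assms(2) by (simp add: matrix_vector_mul_assoc)
  then have "range ((*v) Q) \<subseteq> range ((*v) Q0)"
    by blast
  then have "vec.span (range ((*v) Q)) = vec.span (range ((*v) Q0))"
    using vec.dim_eq_span dim by blast
  then have ranges: "range ((*v) Q) = range ((*v) Q0)"
    using range_mv_subspace[of Q] range_mv_subspace[of Q0] by (metis vec.span_eq_iff)
  have "Q ** Q0 = Q0"
  proof (subst matrix_eq, intro allI)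
    fix x
    have "Q0 *v x \<in> range ((*v) Q)"
      using ranges by blast
    then obtain z where z: "Q0 *v x = Q *v z"
      by blast
    then show "(Q ** Q0) *v x = Q0 *v x"
      by (metis assms(1) matrix_vector_mul_assoc)
  qed
  then show ?thesis
    using assms(3) by simp
qed

lemma
  assumes "P \<in> summand_units A"
  shows summand_unit_AC: "P \<in> AC A"
    and summand_unit_idem: "P ** P = P"
    and summand_unit_selfadjoint: "adj P = P"
    and summand_unit_nonzero: "P \<noteq> 0"
    and summand_unit_central: "x \<in> AC A \<Longrightarrow> P ** x = x ** P"
  using assms by (auto simp: summand_units_def central_projection_def)

lemma summand_units_orthogonal:
  assumes P: "P \<in> summand_units A" and P': "P' \<in> summand_units A" and "P \<noteq> P'"
  shows "P ** P' = 0"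
proof (rule ccontr)
  assume "P ** P' \<noteq> 0"
  have comm: "P' ** P = P ** P'"
    using summand_unit_central[OF P' summand_unit_AC[OF P]] by simp
  have "central_projection (AC A) (P ** P')"
    unfolding central_projection_def
  proof (intro conjI ballI)
    show "P ** P' \<in> AC A"
      using P P' by (simp add: AC_def star_alg_gen.mult summand_unit_AC[unfolded AC_def])
    show "P ** P' ** (P ** P') = P ** P'"
      by (metis P P' summand_unit_idem comm matrix_mul_assoc)
    show "adj (P ** P') = P ** P'"
      by (simp add: adj_mult summand_unit_selfadjoint[OF P] summand_unit_selfadjoint[OF P'] comm)
    show "P ** P' \<noteq> 0" by fact
    show "P ** P' ** x = x ** (P ** P')" if "x \<in> AC A" for x
      by (metis P P' summand_unit_central that matrix_mul_assoc)
  qed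
  moreover have "P ** P' ** P = P ** P'"
    by (metis P summand_unit_idem comm matrix_mul_assoc)
  moreover have "P ** P' ** P' = P ** P'"
    by (metis P' summand_unit_idem matrix_mul_assoc)
  ultimately have "P ** P' = P" and "P ** P' = P'"
    using P P' unfolding summand_units_def by blast+
  then show False
    using \<open>P \<noteq> P'\<close> by simp
qed

text \<open>Nonzero pairwise orthogonal projections are linearly independent.\<close>
lemma finite_summand_units: "finite (summand_units A)"
proof -
  have "\<not> dependent (summand_units A)"
  proof
    assume "dependent (summand_units A)"
    then obtain t u v where t: "finite t" "t \<subseteq> summand_units A" "(\<Sum>w\<in>t. u w *\<^sub>R w) = 0"
      and v: "v \<in> t" "u v \<noteq> 0"
      unfolding real_vector.dependent_explicit by blast
    have "v ** (\<Sum>w\<in>t. u w *\<^sub>R w) = (\<Sum>w\<in>t. if w = v then u v *\<^sub>R v else 0)"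
      unfolding matrix_mult_sum_right matrix_scalar_ac scalar_matrix_assoc[symmetric]
    proof (intro sum.cong refl)
      fix w assume "w \<in> t"
      then have "w \<in> summand_units A" "v \<in> summand_units A"
        using t v by auto
      then show "u w *\<^sub>R (v ** w) = (if w = v then u v *\<^sub>R v else 0)"
        using summand_units_orthogonal[of v A w] summand_unit_idem[of v A] by auto
    qed
    then have "u v *\<^sub>R v = 0"
      using t v by simp
    then show False
      using t v summand_unit_nonzero by auto
  qed
  then show ?thesis
    using independent_bound by blast
qed

lemma summand_unit_mult_sum:
  assumes "P \<in> summand_units A"
  shows "P ** (\<Sum>Q\<in>summand_units A. Q) = P"
proof -
  have "P ** (\<Sum>Q\<in>summand_units A. Q) = (\<Sum>Q\<in>summand_units A. if Q = P then P else 0)"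
    unfolding matrix_mult_sum_right
    using assms summand_units_orthogonal summand_unit_idem by (intro sum.cong) auto
  also have "\<dots> = P"
    using assms by (simp add: sum.delta[OF finite_summand_units])
  finally show ?thesis .
qed

lemma summand_unit_below:
  assumes R: "central_projection (AC A) R"
  shows "\<exists>Q\<in>summand_units A. Q ** R = Q"
proof -
  define K where "K = {Q. central_projection (AC A) Q \<and> Q ** R = Q}"
  define d where "d Q = vec.dim (range ((*v) Q))" for Q :: "'a cop"
  have "R \<in> K"
    using R unfolding K_def central_projection_def by simp
  then obtain Q0 where "Q0 \<in> K" and least: "\<And>Q. Q \<in> K \<Longrightarrow> d Q0 \<le> d Q"
    using ex_has_least_nat[of "\<lambda>Q. Q \<in> K" R d] by blast
  then have Q0: "central_projection (AC A) Q0" "Q0 ** R = Q0"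
    unfolding K_def by auto
  have "Q = Q0" if Q: "central_projection (AC A) Q" and QQ0: "Q ** Q0 = Q" for Q
  proof (rule projection_eq_of_dim_le)
    show "Q ** Q = Q"
      using Q by (simp add: central_projection_def)
    have "Q0 ** Q = Q ** Q0"
      using Q Q0(1) unfolding central_projection_def by blast
    then show "Q0 ** Q = Q"
      using QQ0 by simp
    show "Q ** Q0 = Q" by fact
    have "Q ** R = Q"
      using QQ0 Q0(2) by (metis matrix_mul_assoc)
    then have "Q \<in> K"
      using Q unfolding K_def by simp
    then show "vec.dim (range ((*v) Q0)) \<le> vec.dim (range ((*v) Q))"
      using least unfolding d_def by blast
  qed
  then have "Q0 \<in> summand_units A"
    using Q0(1) unfolding summand_units_def by blast
  then show ?thesis
    using Q0(2) by blast
qed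

lemma sum_summand_units:
  assumes "mat 1 \<in> A"
  shows "(\<Sum>P\<in>summand_units A. P) = mat 1"
proof (rule ccontr)
  define S where "S = (\<Sum>P\<in>summand_units A. P)"
  assume "S \<noteq> mat 1"
  have S_AC: "S \<in> AC A"
    unfolding S_def AC_def by (intro star_alg_gen_sum) (simp add: summand_unit_AC[unfolded AC_def])
  have "central_projection (AC A) (mat 1 - S)"
    unfolding central_projection_def
  proof (intro conjI ballI)
    show "mat 1 - S \<in> AC A"
      using star_alg_gen_diff[OF star_alg_gen.gen S_AC[unfolded AC_def]] assms
      by (simp add: AC_def)
    have "S ** S = S"
      unfolding S_def by (simp add: matrix_mult_sum_left summand_unit_mult_sum)
    then show "(mat 1 - S) ** (mat 1 - S) = mat 1 - S"
      by (simp add: matrix_diff_ldistrib matrix_diff_rdistrib)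
    show "adj (mat 1 - S) = mat 1 - S"
      unfolding S_def by (simp add: adj_diff adj_sum summand_unit_selfadjoint)
        (simp add: adj_def mat_def vec_eq_iff)
    show "mat 1 - S \<noteq> 0"
      using \<open>S \<noteq> mat 1\<close> by simp
    show "(mat 1 - S) ** x = x ** (mat 1 - S)" if "x \<in> AC A" for x
    proof -
      have "S ** x = x ** S"
        unfolding S_def matrix_mult_sum_left matrix_mult_sum_right
        using summand_unit_central that by (intro sum.cong) auto
      then show ?thesis
        by (simp add: matrix_diff_ldistrib matrix_diff_rdistrib)
    qed
  qed
  then obtain Q where Q: "Q \<in> summand_units A" "Q ** (mat 1 - S) = Q"
    using summand_unit_below by blast
  then have "Q ** (mat 1 - S) = 0"
    unfolding S_def by (simp add: matrix_diff_ldistrib summand_unit_mult_sum)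
  then show False
    using Q summand_unit_nonzero[OF Q(1)] by simp
qed

locale spectral_triple =
  fixes A :: "'n::finite cop set" and D :: "'n cop" and J :: "'n hvec \<Rightarrow> 'n hvec"
    and eps eps' :: complex and grading :: "('n cop \<times> complex) option"
  assumes triple: "real_spectral_triple A D J eps eps' grading"
begin

text \<open>For b \<in> A, Jc b is the paper's (b*)\<degree>; as A is *-closed, Jc ` A = A\<degree>.\<close>
abbreviation "Jc \<equiv> Jconj J"
abbreviation "U \<equiv> summand_units A"

sublocale antilinear_isometric J
  using triple by unfold_locales (simp add: real_spectral_triple_def)

lemma D_selfadjoint: "adj D = D"
  using triple by (simp add: real_spectral_triple_def)

lemma one_mem: "mat 1 \<in> A"
  using triple by (simp add: real_spectral_triple_def real_star_subalgebra_def)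

lemma adj_mem: "a \<in> A \<Longrightarrow> adj a \<in> A"
  using triple by (simp add: real_spectral_triple_def real_star_subalgebra_def)

lemma eps'_nonzero: "eps' \<noteq> 0"
  using triple by (auto simp: real_spectral_triple_def)

lemma order_zero: "a \<in> A \<Longrightarrow> b \<in> A \<Longrightarrow> a ** Jc b = Jc b ** a"
  using triple by (simp add: real_spectral_triple_def commutator_eq_0_iff)

lemma order_one: "a \<in> A \<Longrightarrow> b \<in> A \<Longrightarrow> commutator D a ** Jc b = Jc b ** commutator D a"
  using triple by (simp add: real_spectral_triple_def commutator_eq_0_iff)

lemma Jconj_involutive: "Jc (Jc X) = X"
proof -
  have JJ: "J (J x) = eps *s x" for x
    using triple by (simp add: real_spectral_triple_def)
  have eps: "eps * eps = 1" "cnj eps = eps"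
    using triple by (auto simp: real_spectral_triple_def)
  have inv: "inv J x = eps *s J x" for x
  proof -
    have "J (eps *s J x) = x"
      by (simp add: antilinear_scale JJ eps)
    then show ?thesis
      by (metis antilinear_inv_right)
  qed
  have "Jc (Jc X) *v x = X *v x" for x
    by (simp add: Jconj_mv inv JJ antilinear_scale eps vec.scale)
  then show ?thesis
    by (simp add: matrix_eq)
qed

lemma Jconj_D: "Jc D = cscale eps' D"
  using triple by (simp add: matrix_eq Jconj_mv cscale_mv real_spectral_triple_def)

lemma Jconj_commutator_D: "Jc (commutator D X) = cscale eps' (commutator D (Jc X))"
  by (simp add: Jconj_commutator Jconj_D commutator_cscale_left)

lemma order_zero_AC: "a \<in> AC A \<Longrightarrow> b \<in> AC A \<Longrightarrow> a ** Jc b = Jc b ** a"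
proof -
  have "A \<subseteq> commutant (Jc ` A \<union> adj ` Jc ` A)"
    using order_zero adj_mem by (auto simp: mem_commutant adj_Jconj)
  then have "star_alg_gen (Jc ` A) \<subseteq> commutant (AC A)"
    unfolding AC_def by (rule star_alg_gen_commute)
  moreover assume "a \<in> AC A" and "b \<in> AC A"
  ultimately show ?thesis
    using star_alg_gen_Jconj by (force simp: AC_def mem_commutant)
qed

lemma commutator_D_AC_mem_commutant: "x \<in> AC A \<Longrightarrow> commutator D x \<in> commutant (Jc ` A)"
  unfolding AC_def
proof (induction rule: star_alg_gen.induct)
  case (gen a)
  then show ?case
    using order_one by (auto simp: mem_commutant)
next
  case zero
  then show ?case
    by (simp add: commutator_def zero_mem_commutant)
next
  case (add a b)
  then show ?case
    by (simp add: commutator_add_right commutant_add)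
next
  case (scale a c)
  then show ?case
    by (simp add: commutator_cscale_right commutant_cscale)
next
  case (mult a b)
  have "a \<in> commutant (Jc ` A)" and "b \<in> commutant (Jc ` A)"
    using mult order_zero_AC by (auto simp: AC_def mem_commutant star_alg_gen.gen)
  then show ?case
    using mult by (simp add: commutator_mult_right commutant_add commutant_mult)
next
  case (adj a)
  have "adj ` Jc ` A \<subseteq> Jc ` A"
    using adj_mem by (auto simp: adj_Jconj)
  then show ?case
    using adj by (simp add: commutator_adj_right[OF D_selfadjoint] commutant_cscale commutant_adj)
qed

lemma order_one_AC: "a \<in> AC A \<Longrightarrow> b \<in> AC A \<Longrightarrow> commutator D a ** Jc b = Jc b ** commutator D a"
proof -
  let ?T = "{commutator D x | x. x \<in> AC A}"
  have "adj (commutator D x) \<in> ?T" if "x \<in> AC A" for x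
  proof -
    have "cscale (-1) (adj x) \<in> AC A"
      using that by (simp add: AC_def star_alg_gen.adj star_alg_gen.scale)
    moreover have "adj (commutator D x) = commutator D (cscale (-1) (adj x))"
      by (simp add: commutator_adj_right[OF D_selfadjoint] commutator_cscale_right cscale_cscale)
    ultimately show ?thesis
      by blast
  qed
  then have "adj ` ?T \<subseteq> ?T"
    by blast
  moreover have "Jc ` A \<subseteq> commutant ?T"
    using commutator_D_AC_mem_commutant by (auto simp: subset_commutant_sym[of "Jc ` A"])
  ultimately have "star_alg_gen (Jc ` A) \<subseteq> commutant ?T"
    by (rule star_alg_gen_subset_commutant)
  moreover assume "a \<in> AC A" and "b \<in> AC A"
  ultimately show ?thesis
    using star_alg_gen_Jconj by (force simp: AC_def mem_commutant)
qed

lemma commutator_D_Jconj_AC: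
  "a \<in> AC A \<Longrightarrow> b \<in> AC A \<Longrightarrow> a ** commutator D (Jc b) = commutator D (Jc b) ** a"
  by (rule commutes_with_commutator_jacobi) (simp_all add: order_zero_AC order_one_AC)

subsection \<open>Splitting the Dirac operator\<close>

lemma Jconj_summand_unit_idem: "P \<in> U \<Longrightarrow> Jc P ** Jc P = Jc P"
  by (simp add: Jconj_mult[symmetric] summand_unit_idem)

lemma Jconj_summand_units_orthogonal: "P \<in> U \<Longrightarrow> P' \<in> U \<Longrightarrow> P \<noteq> P' \<Longrightarrow> Jc P ** Jc P' = 0"
  by (simp add: Jconj_mult[symmetric] summand_units_orthogonal)

lemma sum_Jconj_summand_units: "(\<Sum>P\<in>U. Jc P) = mat 1"
proof -
  have "Jc (mat 1) = mat 1"
    by (simp add: matrix_eq Jconj_mv)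
  then show ?thesis
    by (simp add: Jconj_sum[symmetric] sum_summand_units one_mem)
qed

lemma summand_unit_commute_Jconj: "P \<in> U \<Longrightarrow> P' \<in> U \<Longrightarrow> P ** Jc P' = Jc P' ** P"
  by (simp add: order_zero_AC summand_unit_AC)

lemma off_diagonal_block_commute_Jconj:
  assumes "P \<in> U" "P' \<in> U" "P \<noteq> P'" "b \<in> AC A"
  shows "(P ** D ** P') ** Jc b = Jc b ** (P ** D ** P')"
proof -
  have "P ** Jc b = Jc b ** P"
    using assms order_zero_AC summand_unit_AC by blast
  moreover have "commutator D P' ** Jc b = Jc b ** commutator D P'"
    using assms order_one_AC summand_unit_AC by blast
  ultimately show ?thesis
    unfolding mult_commutator_of_orthogonal[OF summand_units_orthogonal[OF assms(1-3)]]
    by (metis matrix_mul_assoc)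
qed

lemma Jconj_off_diagonal_block_commute:
  assumes "P \<in> U" "P' \<in> U" "P \<noteq> P'" "a \<in> AC A"
  shows "a ** (Jc P ** D ** Jc P') = (Jc P ** D ** Jc P') ** a"
proof -
  have "a ** Jc P = Jc P ** a"
    using assms order_zero_AC summand_unit_AC by blast
  moreover have "a ** commutator D (Jc P') = commutator D (Jc P') ** a"
    using assms commutator_D_Jconj_AC summand_unit_AC by blast
  ultimately show ?thesis
    unfolding mult_commutator_of_orthogonal[OF Jconj_summand_units_orthogonal[OF assms(1-3)]]
    by (metis matrix_mul_assoc)
qed

text \<open>Off-diagonal P-blocks commute with the Q's, so the Q's sum out of D0 (and symmetrically
  out of D1).\<close>
lemma D0_eq: "D0 A D J = (\<Sum>P\<in>U. \<Sum>P'\<in>U-{P}. P ** D ** P')"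
proof -
  have block: "Dblock J D P Q P' Q = Jc Q ** (P ** D ** P')"
    if "P \<in> U" "Q \<in> U" "P' \<in> U" "P \<noteq> P'" for P Q P'
  proof -
    have "Dblock J D P Q P' Q = (P ** Jc Q) ** (D ** P' ** Jc Q)"
      by (simp add: Dblock_def matrix_mul_assoc)
    also have "\<dots> = Jc Q ** ((P ** D ** P') ** Jc Q)"
      using summand_unit_commute_Jconj[OF that(1,2)] by (simp add: matrix_mul_assoc)
    also have "\<dots> = Jc Q ** (Jc Q ** (P ** D ** P'))"
      using off_diagonal_block_commute_Jconj[of P P' Q] that summand_unit_AC[OF that(2)] by simp
    also have "\<dots> = Jc Q ** (P ** D ** P')"
      using that by (simp add: matrix_mul_assoc Jconj_summand_unit_idem)
    finally show ?thesis .
  qed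
  have "D0 A D J = (\<Sum>P\<in>U. \<Sum>Q\<in>U. \<Sum>P'\<in>U-{P}. Jc Q ** (P ** D ** P'))"
    unfolding D0_def using block by (intro sum.cong refl) auto
  also have "\<dots> = (\<Sum>P\<in>U. \<Sum>P'\<in>U-{P}. (\<Sum>Q\<in>U. Jc Q) ** (P ** D ** P'))"
    unfolding matrix_mult_sum_left by (intro sum.cong refl sum.swap)
  finally show ?thesis
    by (simp add: sum_Jconj_summand_units)
qed

lemma D1_eq: "D1 A D J = (\<Sum>Q\<in>U. \<Sum>Q'\<in>U-{Q}. Jc Q ** D ** Jc Q')"
proof -
  have block: "Dblock J D P Q P Q' = P ** (Jc Q ** D ** Jc Q')"
    if "P \<in> U" "Q \<in> U" "Q' \<in> U" "Q \<noteq> Q'" for P Q Q'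
  proof -
    have "Dblock J D P Q P Q' = (P ** Jc Q ** D) ** (P ** Jc Q')"
      by (simp add: Dblock_def matrix_mul_assoc)
    also have "\<dots> = P ** ((Jc Q ** D ** Jc Q') ** P)"
      using summand_unit_commute_Jconj[OF that(1,3)] by (simp add: matrix_mul_assoc)
    also have "\<dots> = P ** (P ** (Jc Q ** D ** Jc Q'))"
      using Jconj_off_diagonal_block_commute[of Q Q' P] that summand_unit_AC[OF that(1)] by simp
    also have "\<dots> = P ** (Jc Q ** D ** Jc Q')"
      using that by (simp add: matrix_mul_assoc summand_unit_idem)
    finally show ?thesis .
  qed
  have "D1 A D J = (\<Sum>P\<in>U. \<Sum>Q\<in>U. \<Sum>Q'\<in>U-{Q}. P ** (Jc Q ** D ** Jc Q'))"
    unfolding D1_def using block by (intro sum.cong refl) auto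
  also have "\<dots> = (\<Sum>Q\<in>U. \<Sum>Q'\<in>U-{Q}. \<Sum>P\<in>U. P ** (Jc Q ** D ** Jc Q'))"
    by (subst sum.swap) (intro sum.cong refl sum.swap)
  finally show ?thesis
    by (simp add: matrix_mult_sum_left[symmetric] sum_summand_units one_mem)
qed

lemma D_decomposition: "D = D0 A D J + D1 A D J + DR A D J"
proof -
  have block: "P ** (Jc Q ** D ** Jc Q) ** P' = Dblock J D P Q P' Q"
    if "Q \<in> U" "P' \<in> U" for P Q P'
  proof -
    have "P ** (Jc Q ** D ** Jc Q) ** P' = (P ** Jc Q ** D) ** (Jc Q ** P')"
      by (simp add: matrix_mul_assoc)
    also have "\<dots> = (P ** Jc Q ** D) ** (P' ** Jc Q)"
      by (simp only: summand_unit_commute_Jconj[OF that(2,1)])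
    also have "\<dots> = Dblock J D P Q P' Q"
      by (simp add: Dblock_def matrix_mul_assoc)
    finally show ?thesis .
  qed
  have "(\<Sum>Q\<in>U. Jc Q ** D ** Jc Q)
      = (\<Sum>Q\<in>U. (\<Sum>P\<in>U. P) ** (Jc Q ** D ** Jc Q) ** (\<Sum>P'\<in>U. P'))"
    by (simp add: sum_summand_units one_mem)
  also have "\<dots> = (\<Sum>P\<in>U. \<Sum>Q\<in>U. \<Sum>P'\<in>U. Dblock J D P Q P' Q)"
    unfolding matrix_mult_sum_sum by (subst sum.swap) (simp add: block)
  also have "\<dots> = D0 A D J + DR A D J"
    unfolding D0_def DR_def sum.distrib[symmetric]
    by (intro sum.cong refl) (simp add: sum.remove finite_summand_units add.commute)
  finally have diagonal: "(\<Sum>Q\<in>U. Jc Q ** D ** Jc Q) = D0 A D J + DR A D J" .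
  have "D = (\<Sum>Q\<in>U. Jc Q) ** D ** (\<Sum>Q'\<in>U. Jc Q')"
    by (simp add: sum_Jconj_summand_units)
  also have "\<dots> = D1 A D J + (\<Sum>Q\<in>U. Jc Q ** D ** Jc Q)"
    unfolding matrix_mult_sum_sum D1_eq by (rule sum_split_diagonal[OF finite_summand_units])
  finally show ?thesis
    by (simp add: diagonal add_ac)
qed

lemma Jconj_DR: "Jc (DR A D J) = cscale eps' (DR A D J)"
proof -
  have block: "Jc (Dblock J D P Q P Q) = cscale eps' (Dblock J D Q P Q P)"
    if "P \<in> U" "Q \<in> U" for P Q
  proof -
    have "Jc (Dblock J D P Q P Q) = cscale eps' ((Jc P ** Q) ** D ** (Jc P ** Q))"
      by (simp add: Dblock_def Jconj_mult Jconj_involutive Jconj_D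
          cscale_mult_left cscale_mult_right matrix_mul_assoc)
    also have "\<dots> = cscale eps' ((Q ** Jc P) ** D ** (Q ** Jc P))"
      by (simp only: summand_unit_commute_Jconj[OF that(2,1)])
    also have "\<dots> = cscale eps' (Dblock J D Q P Q P)"
      by (simp add: Dblock_def matrix_mul_assoc)
    finally show ?thesis .
  qed
  have "Jc (DR A D J) = (\<Sum>P\<in>U. \<Sum>Q\<in>U. cscale eps' (Dblock J D Q P Q P))"
    unfolding DR_def Jconj_sum using block by (intro sum.cong refl) auto
  also have "\<dots> = cscale eps' (DR A D J)"
    unfolding DR_def cscale_sum by (rule sum.swap)
  finally show ?thesis .
qed

lemma D0_commute_Jconj: "b \<in> AC A \<Longrightarrow> D0 A D J ** Jc b = Jc b ** D0 A D J"
proof -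
  assume "b \<in> AC A"
  then have "P ** D ** P' \<in> commutant {Jc b}" if "P \<in> U" "P' \<in> U - {P}" for P P'
    using off_diagonal_block_commute_Jconj[of P P' b] that by (auto simp: mem_commutant)
  then have "D0 A D J \<in> commutant {Jc b}"
    unfolding D0_eq by (intro commutant_sum) auto
  then show ?thesis
    by (simp add: mem_commutant)
qed

lemma D1_commute_AC: "a \<in> AC A \<Longrightarrow> a ** D1 A D J = D1 A D J ** a"
proof -
  assume "a \<in> AC A"
  then have "Jc Q ** D ** Jc Q' \<in> commutant {a}" if "Q \<in> U" "Q' \<in> U - {Q}" for Q Q'
    using Jconj_off_diagonal_block_commute[of Q Q' a] that by (auto simp: mem_commutant)
  then have "D1 A D J \<in> commutant {a}"
    unfolding D1_eq by (intro commutant_sum) auto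
  then show ?thesis
    by (simp add: mem_commutant)
qed

subsection \<open>The second-order condition\<close>

abbreviation "cliff_gen \<equiv> A \<union> {a ** commutator D b | a b. a \<in> A \<and> b \<in> A}"

lemma AC_subset_CliffD: "AC A \<subseteq> CliffD A D"
  unfolding AC_def CliffD_def by (rule star_alg_gen_mono) auto

lemma commutator_D_AC_mem_CliffD: "x \<in> AC A \<Longrightarrow> commutator D x \<in> CliffD A D"
  unfolding AC_def
proof (induction rule: star_alg_gen.induct)
  case (gen a)
  then have "mat 1 ** commutator D a \<in> cliff_gen"
    using one_mem by blast
  then show ?case
    unfolding CliffD_def by (simp add: star_alg_gen.gen)
next
  case zero
  then show ?case
    by (simp add: CliffD_def commutator_def star_alg_gen.zero)
next
  case (add a b)
  then show ?case
    by (simp add: CliffD_def commutator_add_right star_alg_gen.add)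
next
  case (scale a c)
  then show ?case
    by (simp add: CliffD_def commutator_cscale_right star_alg_gen.scale)
next
  case (mult a b)
  then have "a \<in> CliffD A D" "b \<in> CliffD A D"
    using AC_subset_CliffD by (auto simp: AC_def)
  then show ?case
    using mult unfolding commutator_mult_right CliffD_def
    by (simp add: star_alg_gen.add star_alg_gen.mult)
next
  case (adj a)
  then show ?case
    by (simp add: CliffD_def commutator_adj_right[OF D_selfadjoint] star_alg_gen.adj
        star_alg_gen.scale)
qed

lemma mult_commutator_D_mem_CliffD: "a \<in> AC A \<Longrightarrow> b \<in> AC A \<Longrightarrow> a ** commutator D b \<in> CliffD A D"
  using AC_subset_CliffD commutator_D_AC_mem_CliffD[of b] by (auto simp: CliffD_def star_alg_gen.mult)

lemma adj_mult_commutator_of_orthogonal: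
  "P \<in> U \<Longrightarrow> P' \<in> U \<Longrightarrow> P \<noteq> P' \<Longrightarrow> adj (P' ** commutator D P) = P ** D ** P'"
  by (simp add: adj_mult commutator_def adj_diff D_selfadjoint summand_unit_selfadjoint
      matrix_diff_rdistrib matrix_mul_assoc[symmetric] summand_units_orthogonal)

lemma second_order_imp_D0_D1_commute:
  assumes "second_order_condition A D J"
  shows "D0 A D J ** D1 A D J = D1 A D J ** D0 A D J"
proof -
  have blocks: "Jc Q ** D ** Jc Q' \<in> commutant {P ** D ** P'}"
    if "P \<in> U" "P' \<in> U - {P}" "Q \<in> U" "Q' \<in> U - {Q}" for P P' Q Q'
  proof -
    from that have "P \<noteq> P'" "Q \<noteq> Q'"
      by auto
    have "P ** commutator D P' \<in> CliffD A D" "Q' ** commutator D Q \<in> CliffD A D"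
      using that by (simp_all add: mult_commutator_D_mem_CliffD summand_unit_AC)
    then have "(P ** commutator D P') ** opp J (Q' ** commutator D Q)
        = opp J (Q' ** commutator D Q) ** (P ** commutator D P')"
      using assms unfolding second_order_condition_def by blast
    moreover have "opp J (Q' ** commutator D Q) = cscale eps' (Jc Q ** D ** Jc Q')"
      using that \<open>Q \<noteq> Q'\<close> by (simp add: opp_def adj_mult_commutator_of_orthogonal Jconj_mult Jconj_D
          cscale_mult_left cscale_mult_right)
    ultimately have "cscale eps' ((P ** D ** P') ** (Jc Q ** D ** Jc Q'))
        = cscale eps' ((Jc Q ** D ** Jc Q') ** (P ** D ** P'))"
      using that \<open>P \<noteq> P'\<close> by (simp add: mult_commutator_of_orthogonal summand_units_orthogonal
          cscale_mult_left cscale_mult_right)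
    then show ?thesis
      using cscale_cancel eps'_nonzero by (simp add: mem_commutant)
  qed
  have "D1 A D J \<in> commutant {P ** D ** P'}" if "P \<in> U" "P' \<in> U - {P}" for P P'
    unfolding D1_eq using blocks that by (intro commutant_sum) auto
  then have "D0 A D J \<in> commutant {D1 A D J}"
    unfolding D0_eq by (intro commutant_sum) (auto simp: mem_commutant)
  then show ?thesis
    by (simp add: mem_commutant)
qed

context
  assumes DR_central: "\<forall>a\<in>A. DR A D J ** a = a ** DR A D J"
begin

lemma DR_commute_Jconj: "b \<in> A \<Longrightarrow> DR A D J ** Jc b = Jc b ** DR A D J"
proof -
  assume "b \<in> A"
  then have "Jc (DR A D J ** b) = Jc (b ** DR A D J)"
    using DR_central by simp
  then have "cscale eps' (DR A D J ** Jc b) = cscale eps' (Jc b ** DR A D J)"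
    by (simp add: Jconj_mult Jconj_DR cscale_mult_left cscale_mult_right)
  then show ?thesis
    using cscale_cancel eps'_nonzero by blast
qed

lemma commutator_D_eq_D0: "c \<in> A \<Longrightarrow> commutator D c = commutator (D0 A D J) c"
proof -
  assume c: "c \<in> A"
  have "commutator (D1 A D J) c = 0" "commutator (DR A D J) c = 0"
    using D1_commute_AC[OF mem_AC[OF c]] DR_central c by (simp_all add: commutator_eq_0_iff)
  then show ?thesis
    by (subst D_decomposition) (simp add: commutator_add_left)
qed

lemma commutator_D_Jconj_eq_D1: "b \<in> A \<Longrightarrow> commutator D (Jc b) = commutator (D1 A D J) (Jc b)"
proof -
  assume b: "b \<in> A"
  have "commutator (D0 A D J) (Jc b) = 0" "commutator (DR A D J) (Jc b) = 0"
    using D0_commute_Jconj[OF mem_AC[OF b]] DR_commute_Jconj[OF b]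
    by (simp_all add: commutator_eq_0_iff)
  then show ?thesis
    by (subst D_decomposition) (simp add: commutator_add_left)
qed

lemma commutators_commute:
  assumes "D0 A D J ** D1 A D J = D1 A D J ** D0 A D J" and "b \<in> A" and "c \<in> A"
  shows "commutator D c ** commutator D (Jc b) = commutator D (Jc b) ** commutator D c"
proof -
  have "D1 A D J ** commutator (D0 A D J) c = commutator (D0 A D J) c ** D1 A D J"
    using assms D1_commute_AC[of c] by (intro commutes_with_commutator) (simp_all add: mem_AC)
  moreover have "Jc b ** commutator (D0 A D J) c = commutator (D0 A D J) c ** Jc b"
    using assms D0_commute_Jconj[of b] order_zero[of c b]
    by (intro commutes_with_commutator) (simp_all add: mem_AC)
  ultimately show ?thesis
    using assms by (simp add: commutator_D_eq_D0 commutator_D_Jconj_eq_D1 commutes_with_commutator)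
qed

lemma mem_commutant_cliff_gen:
  assumes "\<And>a. a \<in> A \<Longrightarrow> a ** y = y ** a"
    and "\<And>c. c \<in> A \<Longrightarrow> commutator D c ** y = y ** commutator D c"
  shows "y \<in> commutant cliff_gen"
  unfolding mem_commutant using assms by (auto simp: matrix_mul_assoc) (metis matrix_mul_assoc)

lemma Jconj_cliff_gen_mem_commutant:
  assumes "D0 A D J ** D1 A D J = D1 A D J ** D0 A D J" and "h \<in> cliff_gen"
  shows "Jc h \<in> commutant cliff_gen \<and> Jc (adj h) \<in> commutant cliff_gen"
proof -
  have Jconj: "Jc b \<in> commutant cliff_gen" if "b \<in> A" for b
    using that order_zero order_one by (intro mem_commutant_cliff_gen) simp_all
  have commutator_Jconj: "commutator D (Jc b) \<in> commutant cliff_gen" if "b \<in> A" for b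
    using that commutator_D_Jconj_AC commutators_commute[OF assms(1)]
    by (intro mem_commutant_cliff_gen) (simp_all add: mem_AC)
  from assms(2) show ?thesis
  proof
    assume "h \<in> A"
    then show ?thesis
      using Jconj adj_mem by blast
  next
    assume "h \<in> {a ** commutator D b | a b. a \<in> A \<and> b \<in> A}"
    then obtain a b where h: "h = a ** commutator D b" "a \<in> A" "b \<in> A"
      by blast
    have "Jc h = Jc a ** cscale eps' (commutator D (Jc b))"
      by (simp add: h Jconj_mult Jconj_commutator_D)
    moreover have "Jc (adj h) = cscale (- eps') (commutator D (Jc (adj b))) ** Jc (adj a)"
      by (simp add: h adj_mult adj_commutator[OF D_selfadjoint] Jconj_mult Jconj_cscale
          Jconj_commutator_D cscale_cscale)
    ultimately show ?thesis
      using h Jconj commutator_Jconj adj_mem by (simp add: commutant_mult commutant_cscale)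
  qed
qed

lemma D0_D1_commute_imp_second_order:
  assumes "D0 A D J ** D1 A D J = D1 A D J ** D0 A D J"
  shows "second_order_condition A D J"
proof -
  have "opp J h \<in> commutant cliff_gen \<and> adj (opp J h) \<in> commutant cliff_gen"
    if "h \<in> cliff_gen" for h
    using Jconj_cliff_gen_mem_commutant[OF assms that] by (simp add: opp_def adj_Jconj)
  then have "cliff_gen \<subseteq> commutant (opp J ` cliff_gen \<union> adj ` opp J ` cliff_gen)"
    unfolding subset_commutant_sym[of cliff_gen] by blast
  then have "star_alg_gen (opp J ` cliff_gen) \<subseteq> commutant (CliffD A D)"
    unfolding CliffD_def by (rule star_alg_gen_commute)
  moreover have "opp J ` CliffD A D \<subseteq> star_alg_gen (opp J ` cliff_gen)"
    unfolding CliffD_def using star_alg_gen_opp by blast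
  ultimately have "opp J ` CliffD A D \<subseteq> commutant (CliffD A D)"
    by blast
  then show ?thesis
    unfolding second_order_condition_def commutant_def by blast
qed

end

end

theorem proposition9:
  fixes A :: "'n::finite cop set" and D :: "'n cop" and J :: "'n hvec \<Rightarrow> 'n hvec"
    and eps eps' :: complex and grading :: "('n cop \<times> complex) option"
  assumes "real_spectral_triple A D J eps eps' grading"
    and "\<forall>a\<in>A. DR A D J ** a = a ** DR A D J"
  shows "second_order_condition A D J \<longleftrightarrow> D0 A D J ** D1 A D J = D1 A D J ** D0 A D J"
proof -
  interpret spectral_triple A D J eps eps' grading
    by (rule spectral_triple.intro) (fact assms(1))
  show ?thesis
    using second_order_imp_D0_D1_commute D0_D1_commute_imp_second_order[OF assms(2)] by blast
qed

end
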